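(* Let $A\ge2$ and $\mathcal A=\{a_1,\dots,a_A\}$. Consider the chain MDP with states $s_1,\dots,s_H$ and an absorbing terminal state $s_T$, started deterministically at $s_1$. At $s_k$ with $k<H$, action $a_1$ moves to $s_{k+1}$ and every other action moves to $s_T$; $s_T$ is absorbing under all actions. (Whatever $a_1$ does at $s_H$ is irrelevant.) Let $r$ be non-negative mean rewards with $r_h(s_k,a_1)=0$ and $r_h(s_T,a)=0$ for all $h,k,a$, and suppose not all $r_k(s_k,a)$, $k\in[H]$, $a\ne a_1$, vanish. Then $$CR^H(P,r)=CR^1(P,r)=\frac{\max_{k\in[H],\,a\in\mathcal A}r_k(s_k,a)}{\sum_{k=1}^H\sum_{a\in\mathcal A}r_k(s_k,a)}\ge\frac{1}{(A-1)H}.$$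
   Context: Episodic tabular MDP $(\mathcal S,\mathcal A,H,P,R,\mu)$: finite state space $\mathcal S$ with $|\mathcal S|=S$, finite action space $\mathcal A$ with $|\mathcal A|=A$, horizon $H\in\mathbb N$, transition kernels $P_h(\cdot\mid s,a)$, initial state distribution $\mu$, and random non-negative rewards $R_h(s,a)$ for $(h,s,a)\in\mathcal X:=[H]\times\mathcal S\times\mathcal A$. Initially $s_1\sim\mu$; at step $h$ the agent in state $s_h$ picks $a_h$, receives $R_h(s_h,a_h)$ and moves to $s_{h+1}\sim P_h(\cdot\mid s_h,a_h)$. All rewards are drawn before the interaction. The vectors $\mathcal R_h=\{R_h(s,a)\}_{s,a}$ for different $h$ are mutually independent (entries of one $\mathcal R_h$ may be arbitrarily correlated); rewards are independent of transitions, and transitions are independent across steps. Let $r_h(s,a)=\mathbb E[R_h(s,a)]$ and let $\mathcal D(r)$ denote the set of all such reward distributions with means $r$. For $L\in\{0,\dots,H\}$ an $L$-lookahead policy draws $a_h\sim\pi_h(\cdot\mid s_h,\mathcal R_h^L)$, where $\mathcal R_h^L=(\mathcal R_t)_{h\le t\le\min(h+L-1,H)}$ and $\mathcal R_h^0=\emptyset$; $\Pi^L$ is the set of these policies. The value is $V^{L,\pi}(P,r)=\mathbb E[\sum_{h=1}^H R_h(s_h,a_h)]$, and $V^{L,*}(P,r)=\sup_{\pi\in\Pi^L}V^{L,\pi}(P,r)$. The competitive ratio is $CR^L(P,r)=\inf_{\mathcal D(r)}V^{0,*}(P,r)/V^{L,*}(P,r)$, with the convention that any division by zero equals $+\infty$.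 *)

theory Defs
  imports "HOL-Probability.Probability"
begin

definition rew_space :: "'s set \<Rightarrow> 'a set \<Rightarrow> ('s \<times> 'a \<Rightarrow> real) measure" where
  "rew_space S A = PiM (S \<times> A) (\<lambda>_. borel)"

text \<open>D(r): the per-step reward vectors R_1,...,R_H are mutually independent
  (their joint law is the product of the laws nu h), entries of one R_h may be
  arbitrarily correlated; rewards are a.s. non-negative with means r.\<close>

definition reward_dists ::
  "'s set \<Rightarrow> 'a set \<Rightarrow> nat \<Rightarrow> (nat \<Rightarrow> 's \<Rightarrow> 'a \<Rightarrow> real)
     \<Rightarrow> (nat \<Rightarrow> ('s \<times> 'a \<Rightarrow> real) measure) set" where
  "reward_dists S A H r = {\<nu>. \<forall>h\<in>{1..H}.
      prob_space (\<nu> h) \<and> sets (\<nu> h) = sets (rew_space S A) \<and>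
      (\<forall>s\<in>S. \<forall>a\<in>A. integrable (\<nu> h) (\<lambda>x. x (s, a)) \<and>
                     (AE x in \<nu> h. 0 \<le> x (s, a)) \<and>
                     (\<integral>x. x (s, a) \<partial>\<nu> h) = r h s a)}"

text \<open>L-lookahead policies: a_h ~ pi h s_h rho, where pi h s rho may only depend
  on the reward vectors rho t with h <= t <= min (h+L-1) H (for L = 0: on none),
  and is measurable in the rewards.\<close>

definition lookahead_policies ::
  "'s set \<Rightarrow> 'a set \<Rightarrow> nat \<Rightarrow> nat
     \<Rightarrow> (nat \<Rightarrow> 's \<Rightarrow> (nat \<Rightarrow> 's \<times> 'a \<Rightarrow> real) \<Rightarrow> 'a pmf) set" where
  "lookahead_policies S A H L = {\<pi>. \<forall>h\<in>{1..H}. \<forall>s\<in>S.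
      (\<forall>\<rho>. set_pmf (\<pi> h s \<rho>) \<subseteq> A) \<and>
      (\<forall>\<rho> \<rho>'. (\<forall>t. h \<le> t \<and> t \<le> min (h + L - 1) H \<longrightarrow> \<rho> t = \<rho>' t)
                 \<longrightarrow> \<pi> h s \<rho> = \<pi> h s \<rho>') \<and>
      (\<forall>a. (\<lambda>\<rho>. pmf (\<pi> h s \<rho>) a) \<in> borel_measurable (PiM {1..H} (\<lambda>_. rew_space S A)))}"

text \<open>Expected return collected from step h in state s during k remaining steps,
  conditional on the (pre-drawn) reward realization rho.\<close>

fun cond_return ::
  "nat \<Rightarrow> 'a set \<Rightarrow> (nat \<Rightarrow> 's \<Rightarrow> 'a \<Rightarrow> 's pmf)
     \<Rightarrow> (nat \<Rightarrow> 's \<Rightarrow> (nat \<Rightarrow> 's \<times> 'a \<Rightarrow> real) \<Rightarrow> 'a pmf)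
     \<Rightarrow> (nat \<Rightarrow> 's \<times> 'a \<Rightarrow> real) \<Rightarrow> nat \<Rightarrow> 's \<Rightarrow> real" where
  "cond_return 0 A P \<pi> \<rho> h s = 0"
| "cond_return (Suc k) A P \<pi> \<rho> h s =
     (\<Sum>a\<in>A. pmf (\<pi> h s \<rho>) a *
        (\<rho> h (s, a) + measure_pmf.expectation (P h s a) (\<lambda>s'. cond_return k A P \<pi> \<rho> (Suc h) s')))"

text \<open>V^{L,pi}(P,r) = E[sum_h R_h(s_h,a_h)]: average of the conditional return
  over the product law of the reward vectors.\<close>

definition mdp_value ::
  "'s set \<Rightarrow> 'a set \<Rightarrow> nat \<Rightarrow> (nat \<Rightarrow> 's \<Rightarrow> 'a \<Rightarrow> 's pmf) \<Rightarrow> 's pmf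
     \<Rightarrow> (nat \<Rightarrow> 's \<Rightarrow> (nat \<Rightarrow> 's \<times> 'a \<Rightarrow> real) \<Rightarrow> 'a pmf)
     \<Rightarrow> (nat \<Rightarrow> ('s \<times> 'a \<Rightarrow> real) measure) \<Rightarrow> ennreal" where
  "mdp_value S A H P \<mu> \<pi> \<nu> =
     (\<integral>\<^sup>+\<rho>. ennreal (measure_pmf.expectation \<mu> (\<lambda>s. cond_return H A P \<pi> \<rho> 1 s)) \<partial>(PiM {1..H} \<nu>))"

definition opt_value ::
  "'s set \<Rightarrow> 'a set \<Rightarrow> nat \<Rightarrow> (nat \<Rightarrow> 's \<Rightarrow> 'a \<Rightarrow> 's pmf) \<Rightarrow> 's pmf \<Rightarrow> nat
     \<Rightarrow> (nat \<Rightarrow> ('s \<times> 'a \<Rightarrow> real) measure) \<Rightarrow> ennreal" where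
  "opt_value S A H P \<mu> L \<nu> = (SUP \<pi> \<in> lookahead_policies S A H L. mdp_value S A H P \<mu> \<pi> \<nu>)"

definition ratio :: "ennreal \<Rightarrow> ennreal \<Rightarrow> ennreal" where
  "ratio x y = (if y = 0 then \<top> else x / y)"

definition comp_ratio ::
  "'s set \<Rightarrow> 'a set \<Rightarrow> nat \<Rightarrow> (nat \<Rightarrow> 's \<Rightarrow> 'a \<Rightarrow> 's pmf) \<Rightarrow> 's pmf \<Rightarrow> nat
     \<Rightarrow> (nat \<Rightarrow> 's \<Rightarrow> 'a \<Rightarrow> real) \<Rightarrow> ennreal" where
  "comp_ratio S A H P \<mu> L r =
     (INF \<nu> \<in> reward_dists S A H r. ratio (opt_value S A H P \<mu> 0 \<nu>) (opt_value S A H P \<mu> L \<nu>))"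

text \<open>The chain MDP: states s_1..s_H (CS k) and absorbing terminal state CT.\<close>

datatype chain_state = CS nat | CT

definition chain_states :: "nat \<Rightarrow> chain_state set" where
  "chain_states H = CS ` {1..H} \<union> {CT}"

definition chain_P :: "nat \<Rightarrow> 'a \<Rightarrow> nat \<Rightarrow> chain_state \<Rightarrow> 'a \<Rightarrow> chain_state pmf" where
  "chain_P H a1 h s a = (case s of
       CS k \<Rightarrow> (if k < H \<and> a = a1 then return_pmf (CS (Suc k)) else return_pmf CT)
     | CT \<Rightarrow> return_pmf CT)"

definition chain_mu :: "chain_state pmf" where
  "chain_mu = return_pmf (CS 1)"

end

theory Submission
  imports Defs
begin

text \<open>
  Leaving the chain ends the episode, so an agent that knows only the means collects at most one
  of the rewards \<open>r\<^sub>k(s\<^sub>k, a)\<close>: without lookahead the optimal value is their maximum, attained by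
  following \<open>a\<^sub>1\<close> to the best state and taking the best action there. Whatever the lookahead, the
  reward of step \<open>t\<close> is collected in \<open>s\<^sub>t\<close> or in the terminal state, so no policy gets more
  than the sum of all means. For the converse, let each \<open>R\<^sub>t\<close> vanish with probability \<open>1 - \<theta>\<close>
  and otherwise put the mass \<open>A r\<^sub>t(s\<^sub>t, a) / \<theta>\<close> on one uniformly chosen action \<open>a\<close>. With one
  step of lookahead, walk along \<open>a\<^sub>1\<close> and leave the chain as soon as a positive reward is
  visible; this collects step \<open>t\<close> whenever all earlier steps were empty, hence at least
  \<open>(1 - \<theta>)\<^sup>H\<close> times the sum of the means, and \<theta> \<rightarrow> 0 gives the ratio. The final bound holds
  because at most \<open>(A - 1) H\<close> of the means are nonzero and each is at most their maximum.
\<close>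

lemma measurable_find:
  assumes "\<And>b. b \<in> set ys \<Longrightarrow> Measurable.pred M (\<lambda>x. P x b)"
  shows "(\<lambda>x. find (P x) ys) \<in> measurable M (count_space UNIV)"
  using assms
proof (induction ys)
  case (Cons y ys)
  then have "(\<lambda>x. if P x y then Some y else find (P x) ys) \<in> measurable M (count_space UNIV)"
    by (intro measurable_If) auto
  then show ?case by simp
qed simp

lemma find_eq_if_unique_candidate:
  "(\<And>b. b \<in> set xs \<Longrightarrow> b \<noteq> a \<Longrightarrow> \<not> P b) \<Longrightarrow> find P xs = (if a \<in> set xs \<and> P a then Some a else None)"
  by (induction xs) auto

lemma prod_atLeastAtMost_if_less:
  fixes f g :: "nat \<Rightarrow> 'b::comm_monoid_mult"
  assumes "1 \<le> t"
  shows "(\<Prod>i=1..t. if i < t then f i else g i) = (\<Prod>i=1..<t. f i) * g t"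
proof -
  have "{1..t} = insert t {1..<t}"
    using assms by auto
  then show ?thesis
    by (simp add: mult.commute)
qed

lemma sum_prod_prefix_atLeast_Suc:
  fixes z w :: "nat \<Rightarrow> 'b::comm_semiring_1"
  assumes "h \<le> H"
  shows "(\<Sum>t=h..H. (\<Prod>u=h..<t. z u) * w t) = w h + z h * (\<Sum>t=Suc h..H. (\<Prod>u=Suc h..<t. z u) * w t)"
proof -
  have "(\<Sum>t=h..H. (\<Prod>u=h..<t. z u) * w t) = w h + (\<Sum>t=Suc h..H. (\<Prod>u=h..<t. z u) * w t)"
    using assms by (simp add: sum.atLeast_Suc_atMost)
  also have "(\<Sum>t=Suc h..H. (\<Prod>u=h..<t. z u) * w t) = z h * (\<Sum>t=Suc h..H. (\<Prod>u=Suc h..<t. z u) * w t)"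
    unfolding sum_distrib_left by (intro sum.cong) (auto simp: prod.atLeast_Suc_lessThan mult.assoc)
  finally show ?thesis .
qed

lemma ratio_ennreal: "0 \<le> x \<Longrightarrow> 0 < y \<Longrightarrow> ratio (ennreal x) (ennreal y) = ennreal (x / y)"
  by (simp add: ratio_def divide_ennreal)

lemma nn_integral_has_bochner_integral:
  fixes f :: "'a \<Rightarrow> real"
  assumes "has_bochner_integral M f x" "AE y in M. 0 \<le> f y"
  shows "(\<integral>\<^sup>+y. ennreal (f y) \<partial>M) = ennreal x"
  using assms by (simp add: has_bochner_integral_iff nn_integral_eq_integral)

section \<open>Marginals of product probability spaces\<close>

context
  fixes I :: "'i set" and M :: "'i \<Rightarrow> 'a measure"
  assumes prob_space_factors: "\<And>i. i \<in> I \<Longrightarrow> prob_space (M i)"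
begin

text \<open>Locale \<open>product_prob_space\<close> needs a probability space at every index, so the factors
  are padded with a one-point space outside \<open>I\<close>.\<close>

lemma product_prob_space_extended:
  "product_prob_space (\<lambda>i. if i \<in> I then M i else count_space {undefined})"
proof -
  have "prob_space (if i \<in> I then M i else count_space {undefined})" for i
    using prob_space_factors by (auto intro: prob_spaceI)
  then show ?thesis
    by (intro product_prob_space.intro product_sigma_finite.intro product_prob_space_axioms.intro)
       (auto simp: prob_space_imp_sigma_finite)
qed

lemma PiM_extended: "PiM I M = PiM I (\<lambda>i. if i \<in> I then M i else count_space {undefined})"
  by (rule PiM_cong) auto

lemma distr_PiM_component:
  assumes "i \<in> I"
  shows "distr (PiM I M) (M i) (\<lambda>\<omega>. \<omega> i) = M i"
proof -
  interpret product_prob_space "\<lambda>i. if i \<in> I then M i else count_space {undefined}" I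
    by (rule product_prob_space_extended)
  show ?thesis
    using PiM_component[OF assms] assms by (simp add: PiM_extended[symmetric])
qed

lemma AE_PiM_component:
  assumes "i \<in> I" "AE x in M i. P x"
  shows "AE \<omega> in PiM I M. P (\<omega> i)"
proof (rule AE_distrD[of "\<lambda>\<omega>. \<omega> i" "PiM I M" "M i" P])
  show "AE x in distr (PiM I M) (M i) (\<lambda>\<omega>. \<omega> i). P x"
    by (subst distr_PiM_component[OF assms(1)]) (rule assms(2))
qed (use assms(1) in simp)

lemma has_bochner_integral_PiM_component:
  fixes f :: "'a \<Rightarrow> 'b::{banach, second_countable_topology}"
  assumes "i \<in> I" "has_bochner_integral (M i) f x"
  shows "has_bochner_integral (PiM I M) (\<lambda>\<omega>. f (\<omega> i)) x"
proof -
  have comp: "(\<lambda>\<omega>. \<omega> i) \<in> measurable (PiM I M) (M i)"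
    using assms(1) by simp
  have f: "f \<in> borel_measurable (M i)"
    using assms(2) by (auto simp: has_bochner_integral_iff)
  show ?thesis
    using assms integrable_distr_eq[OF comp f] integral_distr[OF comp f]
    by (simp add: has_bochner_integral_iff distr_PiM_component)
qed

lemma nn_integral_PiM_prod:
  assumes "finite I" "J \<subseteq> I" "\<And>i. i \<in> J \<Longrightarrow> f i \<in> borel_measurable (M i)"
  shows "(\<integral>\<^sup>+\<omega>. (\<Prod>i\<in>J. f i (\<omega> i)) \<partial>PiM I M) = (\<Prod>i\<in>J. \<integral>\<^sup>+x. f i x \<partial>M i)"
proof -
  let ?M = "\<lambda>i. if i \<in> I then M i else count_space {undefined}"
  let ?f = "\<lambda>i. if i \<in> J then f i else (\<lambda>_. 1)"
  interpret product_prob_space ?M I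
    by (rule product_prob_space_extended)
  have "(\<Prod>i\<in>I. ?f i (\<omega> i)) = (\<Prod>i\<in>J. f i (\<omega> i))" for \<omega>
    using assms(1,2) by (intro prod.mono_neutral_cong_right) auto
  then have "(\<integral>\<^sup>+\<omega>. (\<Prod>i\<in>J. f i (\<omega> i)) \<partial>PiM I M) = (\<integral>\<^sup>+\<omega>. (\<Prod>i\<in>I. ?f i (\<omega> i)) \<partial>PiM I ?M)"
    by (simp add: PiM_extended[symmetric])
  also have "\<dots> = (\<Prod>i\<in>I. \<integral>\<^sup>+x. ?f i x \<partial>?M i)"
    using assms by (intro product_nn_integral_prod) auto
  also have "\<dots> = (\<Prod>i\<in>J. \<integral>\<^sup>+x. f i x \<partial>M i)"
  proof (rule prod.mono_neutral_cong_right)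
    show "\<forall>i\<in>I - J. (\<integral>\<^sup>+x. ?f i x \<partial>?M i) = 1"
      using prob_space_factors[THEN prob_space.emeasure_space_1] by simp
  qed (use assms(1,2) in auto)
  finally show ?thesis .
qed

end

section \<open>Reward distributions and policies\<close>

lemma measurable_rew_space_entry:
  "s \<in> S \<Longrightarrow> a \<in> A \<Longrightarrow> (\<lambda>x. x (s, a)) \<in> borel_measurable (rew_space S A)"
  unfolding rew_space_def by (rule measurable_component_singleton) auto

context
  fixes \<nu> and S :: "'s set" and A :: "'a set" and H r
  assumes \<nu>: "\<nu> \<in> reward_dists S A H r"
begin

lemma reward_dists_prob_space: "t \<in> {1..H} \<Longrightarrow> prob_space (\<nu> t)"
  using \<nu> by (auto simp: reward_dists_def)

lemma reward_dists_measurable: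
  assumes "t \<in> {1..H}" "g \<in> borel_measurable (rew_space S A)"
  shows "g \<in> borel_measurable (\<nu> t)"
proof -
  have "sets (\<nu> t) = sets (rew_space S A)"
    using \<nu> assms(1) by (auto simp: reward_dists_def)
  with assms(2) show ?thesis
    using measurable_cong_sets[OF _ refl] by blast
qed

lemma has_bochner_integral_reward_entry:
  assumes "t \<in> {1..H}" "s \<in> S" "a \<in> A"
  shows "has_bochner_integral (PiM {1..H} \<nu>) (\<lambda>\<rho>. \<rho> t (s, a)) (r t s a)"
  using assms \<nu> reward_dists_prob_space
  by (intro has_bochner_integral_PiM_component[where f = "\<lambda>x. x (s, a)"])
     (auto simp: reward_dists_def has_bochner_integral_iff)

lemma AE_rewards_nonneg:
  assumes "finite S" "finite A"
  shows "AE \<rho> in PiM {1..H} \<nu>. \<forall>t\<in>{1..H}. \<forall>s\<in>S. \<forall>a\<in>A. 0 \<le> \<rho> t (s, a)"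
  using assms \<nu>
  by (intro AE_finite_allI finite_atLeastAtMost AE_PiM_component[where P = "\<lambda>x. 0 \<le> x (_, _)"])
     (auto simp: reward_dists_def)

end

lemma lookahead_policy_sum_pmf:
  assumes "\<pi> \<in> lookahead_policies S A H L" "h \<in> {1..H}" "s \<in> S" "finite A"
  shows "(\<Sum>a\<in>A. pmf (\<pi> h s \<rho>) a) = 1"
  using assms by (intro sum_pmf_eq_1) (auto simp: lookahead_policies_def)

lemma no_lookahead_policy_const:
  assumes "\<pi> \<in> lookahead_policies S A H 0" "h \<in> {1..H}" "s \<in> S"
  shows "\<pi> h s \<rho> = \<pi> h s \<rho>'"
proof -
  have "\<forall>t. h \<le> t \<and> t \<le> min (h + 0 - 1) H \<longrightarrow> \<rho> t = \<rho>' t"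
    using assms(2) by auto
  then show ?thesis
    using assms unfolding lookahead_policies_def by blast
qed

section \<open>The chain MDP\<close>

definition chain_next :: "nat \<Rightarrow> 'a \<Rightarrow> chain_state \<Rightarrow> 'a \<Rightarrow> chain_state" where
  "chain_next H a1 s a = (case s of CS k \<Rightarrow> if k < H \<and> a = a1 then CS (Suc k) else CT | CT \<Rightarrow> CT)"

lemma chain_next_simps [simp]:
  "chain_next H a1 (CS k) a = (if k < H \<and> a = a1 then CS (Suc k) else CT)"
  "chain_next H a1 CT a = CT"
  by (simp_all add: chain_next_def)

lemma chain_next_in_chain_states: "s \<in> chain_states H \<Longrightarrow> chain_next H a1 s a \<in> chain_states H"
  by (auto simp: chain_next_def chain_states_def split: chain_state.split)

lemma finite_chain_states [simp]: "finite (chain_states H)"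
  by (simp add: chain_states_def)

lemma CS_in_chain_states [simp]: "CS k \<in> chain_states H \<longleftrightarrow> k \<in> {1..H}"
  and CT_in_chain_states [simp]: "CT \<in> chain_states H"
  by (auto simp: chain_states_def)

lemma chain_P_eq_return: "chain_P H a1 h s a = return_pmf (chain_next H a1 s a)"
  by (simp add: chain_P_def chain_next_def split: chain_state.split)

lemma cond_return_chain_Suc:
  "cond_return (Suc k) A (chain_P H a1) \<pi> \<rho> h s =
     (\<Sum>a\<in>A. pmf (\<pi> h s \<rho>) a *
        (\<rho> h (s, a) + cond_return k A (chain_P H a1) \<pi> \<rho> (Suc h) (chain_next H a1 s a)))"
  by (simp add: chain_P_eq_return)

lemma cond_return_chain_deterministic:
  assumes "\<pi> h s \<rho> = return_pmf b" "b \<in> A" "finite A"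
  shows "cond_return (Suc k) A (chain_P H a1) \<pi> \<rho> h s =
           \<rho> h (s, b) + cond_return k A (chain_P H a1) \<pi> \<rho> (Suc h) (chain_next H a1 s b)"
  unfolding cond_return_chain_Suc using assms by (simp add: indicator_def)

locale chain_mdp =
  fixes Acts :: "'a set" and a1 :: 'a and H :: nat and r :: "nat \<Rightarrow> chain_state \<Rightarrow> 'a \<Rightarrow> real"
  assumes finite_Acts: "finite Acts" and a1_in_Acts: "a1 \<in> Acts" and H_pos: "1 \<le> H"
    and r_nonneg: "\<And>h s a. h \<in> {1..H} \<Longrightarrow> s \<in> chain_states H \<Longrightarrow> a \<in> Acts \<Longrightarrow> 0 \<le> r h s a"
    and r_forward: "\<And>h k. h \<in> {1..H} \<Longrightarrow> k \<in> {1..H} \<Longrightarrow> r h (CS k) a1 = 0"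
    and r_terminal: "\<And>h a. h \<in> {1..H} \<Longrightarrow> a \<in> Acts \<Longrightarrow> r h CT a = 0"
begin

abbreviation "S \<equiv> chain_states H"

abbreviation ret :: "nat \<Rightarrow> (nat \<Rightarrow> chain_state \<Rightarrow> (nat \<Rightarrow> chain_state \<times> 'a \<Rightarrow> real) \<Rightarrow> 'a pmf)
    \<Rightarrow> (nat \<Rightarrow> chain_state \<times> 'a \<Rightarrow> real) \<Rightarrow> nat \<Rightarrow> chain_state \<Rightarrow> real" where
  "ret k \<pi> \<rho> h s \<equiv> cond_return k Acts (chain_P H a1) \<pi> \<rho> h s"

abbreviation "V \<pi> \<nu> \<equiv> mdp_value S Acts H (chain_P H a1) chain_mu \<pi> \<nu>"

abbreviation "V_opt L \<nu> \<equiv> opt_value S Acts H (chain_P H a1) chain_mu L \<nu>"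

definition best_reward :: real where
  "best_reward = (MAX (k, a) \<in> {1..H} \<times> Acts. r k (CS k) a)"

definition total_reward :: real where
  "total_reward = (\<Sum>k=1..H. \<Sum>a\<in>Acts. r k (CS k) a)"

lemma best_reward_ge: "k \<in> {1..H} \<Longrightarrow> a \<in> Acts \<Longrightarrow> r k (CS k) a \<le> best_reward"
  unfolding best_reward_def using finite_Acts by (intro Max_ge) force+

lemma best_reward_attained: "\<exists>k\<in>{1..H}. \<exists>a\<in>Acts. best_reward = r k (CS k) a"
proof -
  have "best_reward \<in> (\<lambda>(k, a). r k (CS k) a) ` ({1..H} \<times> Acts)"
    unfolding best_reward_def using finite_Acts H_pos a1_in_Acts by (intro Max_in) auto
  then show ?thesis by auto
qed

lemma best_reward_nonneg: "0 \<le> best_reward"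
  using best_reward_ge[of 1 a1] H_pos a1_in_Acts r_forward by auto

lemma total_reward_pos:
  assumes "\<exists>k\<in>{1..H}. \<exists>a\<in>Acts. r k (CS k) a \<noteq> 0"
  shows "0 < total_reward"
proof -
  obtain k a where k: "k \<in> {1..H}" and a: "a \<in> Acts" and "r k (CS k) a \<noteq> 0"
    using assms by blast
  then have "0 < r k (CS k) a"
    using r_nonneg[of k "CS k" a] by simp
  also have "r k (CS k) a \<le> (\<Sum>b\<in>Acts. r k (CS k) b)"
    using a k finite_Acts r_nonneg by (intro member_le_sum) auto
  also have "\<dots> \<le> total_reward"
    unfolding total_reward_def using k finite_Acts r_nonneg
    by (intro member_le_sum[where f = "\<lambda>k. \<Sum>b\<in>Acts. r k (CS k) b"] sum_nonneg) auto
  finally show ?thesis .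
qed

lemma total_reward_nonneg: "0 \<le> total_reward"
  unfolding total_reward_def using r_nonneg by (intro sum_nonneg) auto

lemma ret_nonneg:
  assumes "\<forall>t\<in>{1..H}. \<forall>s\<in>S. \<forall>a\<in>Acts. 0 \<le> \<rho> t (s, a)"
  shows "1 \<le> h \<Longrightarrow> h + k \<le> H + 1 \<Longrightarrow> s \<in> S \<Longrightarrow> 0 \<le> ret k \<pi> \<rho> h s"
proof (induction k arbitrary: h s)
  case (Suc k)
  have "0 \<le> \<rho> h (s, a) + ret k \<pi> \<rho> (Suc h) (chain_next H a1 s a)" if "a \<in> Acts" for a
    using Suc assms that by (intro add_nonneg_nonneg Suc.IH chain_next_in_chain_states) auto
  then show ?case
    unfolding cond_return_chain_Suc by (intro sum_nonneg mult_nonneg_nonneg) auto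
qed simp

lemma V_eq_nn_integral:
  "V \<pi> \<nu> = (\<integral>\<^sup>+\<rho>. ennreal (ret H \<pi> \<rho> 1 (CS 1)) \<partial>PiM {1..H} \<nu>)"
  by (simp add: mdp_value_def chain_mu_def)

lemma AE_chain_rewards_nonneg:
  "\<nu> \<in> reward_dists S Acts H r \<Longrightarrow> AE \<rho> in PiM {1..H} \<nu>. \<forall>t\<in>{1..H}. \<forall>s\<in>S. \<forall>a\<in>Acts. 0 \<le> \<rho> t (s, a)"
  using finite_Acts by (intro AE_rewards_nonneg) auto

lemma AE_ret_nonneg:
  assumes "\<nu> \<in> reward_dists S Acts H r"
  shows "AE \<rho> in PiM {1..H} \<nu>. 0 \<le> ret H \<pi> \<rho> 1 (CS 1)"
  using AE_chain_rewards_nonneg[OF assms]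
  by eventually_elim (intro ret_nonneg, use H_pos in auto)

subsection \<open>No policy collects more than the total mean reward\<close>

definition reachable_gain :: "(nat \<Rightarrow> chain_state \<times> 'a \<Rightarrow> real) \<Rightarrow> nat \<Rightarrow> real" where
  "reachable_gain \<rho> h = (\<Sum>t=h..H. \<Sum>a\<in>Acts. \<rho> t (CS t, a) + \<rho> t (CT, a))"

lemma ret_le_reachable_gain:
  assumes \<pi>: "\<pi> \<in> lookahead_policies S Acts H L"
    and \<rho>: "\<forall>t\<in>{1..H}. \<forall>s\<in>S. \<forall>a\<in>Acts. 0 \<le> \<rho> t (s, a)"
  shows "1 \<le> h \<Longrightarrow> h + k \<le> H + 1 \<Longrightarrow> s = CS h \<or> s = CT \<Longrightarrow> ret k \<pi> \<rho> h s \<le> reachable_gain \<rho> h"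
proof (induction k arbitrary: h s)
  case 0
  then show ?case
    using \<rho> by (auto simp: reachable_gain_def intro!: sum_nonneg add_nonneg_nonneg)
next
  case (Suc k)
  then have h: "h \<in> {1..H}" by auto
  define g where "g = (\<Sum>a\<in>Acts. \<rho> h (CS h, a) + \<rho> h (CT, a))"
  have gain_Suc: "reachable_gain \<rho> h = g + reachable_gain \<rho> (Suc h)"
    unfolding reachable_gain_def g_def using h by (simp add: sum.atLeast_Suc_atMost)
  have "\<rho> h (s, a) + ret k \<pi> \<rho> (Suc h) (chain_next H a1 s a) \<le> reachable_gain \<rho> h"
    if a: "a \<in> Acts" for a
  proof -
    have "\<rho> h (s, a) \<le> \<rho> h (CS h, a) + \<rho> h (CT, a)"
      using Suc.prems(3) \<rho> h a by auto
    also have "\<dots> \<le> g"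
      unfolding g_def using a finite_Acts \<rho> h by (intro member_le_sum add_nonneg_nonneg) auto
    finally have "\<rho> h (s, a) \<le> g" .
    moreover have "ret k \<pi> \<rho> (Suc h) (chain_next H a1 s a) \<le> reachable_gain \<rho> (Suc h)"
      using Suc.prems by (intro Suc.IH) (auto split: if_splits)
    ultimately show ?thesis
      using gain_Suc by linarith
  qed
  then have "ret (Suc k) \<pi> \<rho> h s \<le> (\<Sum>a\<in>Acts. pmf (\<pi> h s \<rho>) a * reachable_gain \<rho> h)"
    unfolding cond_return_chain_Suc by (intro sum_mono mult_left_mono) auto
  also have "\<dots> = reachable_gain \<rho> h"
    using lookahead_policy_sum_pmf[OF \<pi> h _ finite_Acts] Suc.prems(3) h
    by (auto simp: sum_distrib_right[symmetric])
  finally show ?case .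
qed

lemma has_bochner_integral_reachable_gain:
  assumes "\<nu> \<in> reward_dists S Acts H r"
  shows "has_bochner_integral (PiM {1..H} \<nu>) (\<lambda>\<rho>. reachable_gain \<rho> 1) total_reward"
proof -
  have "has_bochner_integral (PiM {1..H} \<nu>) (\<lambda>\<rho>. reachable_gain \<rho> 1)
      (\<Sum>t=1..H. \<Sum>a\<in>Acts. r t (CS t) a + r t CT a)"
    unfolding reachable_gain_def
    by (intro has_bochner_integral_sum has_bochner_integral_add
        has_bochner_integral_reward_entry[OF assms]) auto
  then show ?thesis
    unfolding total_reward_def using r_terminal by simp
qed

lemma V_le_total_reward:
  assumes \<nu>: "\<nu> \<in> reward_dists S Acts H r" and \<pi>: "\<pi> \<in> lookahead_policies S Acts H L"
  shows "V \<pi> \<nu> \<le> ennreal total_reward"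
proof -
  note nonneg = AE_chain_rewards_nonneg[OF \<nu>]
  have "V \<pi> \<nu> \<le> (\<integral>\<^sup>+\<rho>. ennreal (reachable_gain \<rho> 1) \<partial>PiM {1..H} \<nu>)"
    unfolding V_eq_nn_integral using nonneg
  proof (intro nn_integral_mono_AE, eventually_elim)
    case (elim \<rho>)
    show ?case
      using elim H_pos by (intro ennreal_leI ret_le_reachable_gain[OF \<pi>]) auto
  qed
  also have "\<dots> = ennreal total_reward"
    using has_bochner_integral_reachable_gain[OF \<nu>] nonneg
    by (intro nn_integral_has_bochner_integral)
       (auto elim!: eventually_mono simp: reachable_gain_def intro!: sum_nonneg add_nonneg_nonneg)
  finally show ?thesis .
qed

lemma V_opt_le_total_reward:
  "\<nu> \<in> reward_dists S Acts H r \<Longrightarrow> V_opt L \<nu> \<le> ennreal total_reward"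
  unfolding opt_value_def by (intro SUP_least V_le_total_reward)

subsection \<open>The optimal value without lookahead\<close>

definition mean_rewards :: "nat \<Rightarrow> chain_state \<times> 'a \<Rightarrow> real" where
  "mean_rewards t = (\<lambda>(s, a). r t s a)"

lemma mean_rewards_apply [simp]: "mean_rewards t (s, a) = r t s a"
  by (simp add: mean_rewards_def)

lemma mean_rewards_nonneg: "\<forall>t\<in>{1..H}. \<forall>s\<in>S. \<forall>a\<in>Acts. 0 \<le> mean_rewards t (s, a)"
  by (simp add: r_nonneg)

lemma has_bochner_integral_ret_no_lookahead:
  assumes \<nu>: "\<nu> \<in> reward_dists S Acts H r" and \<pi>: "\<pi> \<in> lookahead_policies S Acts H 0"
  shows "1 \<le> h \<Longrightarrow> h + k \<le> H + 1 \<Longrightarrow> s \<in> S \<Longrightarrow>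
    has_bochner_integral (PiM {1..H} \<nu>) (\<lambda>\<rho>. ret k \<pi> \<rho> h s) (ret k \<pi> mean_rewards h s)"
proof (induction k arbitrary: h s)
  case (Suc k)
  then have h: "h \<in> {1..H}" by auto
  let ?p = "\<lambda>a. pmf (\<pi> h s mean_rewards) a"
  have ret_eq: "ret (Suc k) \<pi> \<rho> h s =
      (\<Sum>a\<in>Acts. ?p a * (\<rho> h (s, a) + ret k \<pi> \<rho> (Suc h) (chain_next H a1 s a)))" for \<rho>
    unfolding cond_return_chain_Suc using no_lookahead_policy_const[OF \<pi> h Suc.prems(3)] by metis
  have entry: "has_bochner_integral (PiM {1..H} \<nu>) (\<lambda>\<rho>. \<rho> h (s, a)) (mean_rewards h (s, a))"
    if "a \<in> Acts" for a
    using has_bochner_integral_reward_entry[OF \<nu> h Suc.prems(3) that] by simp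
  have "has_bochner_integral (PiM {1..H} \<nu>)
      (\<lambda>\<rho>. \<Sum>a\<in>Acts. ?p a * (\<rho> h (s, a) + ret k \<pi> \<rho> (Suc h) (chain_next H a1 s a)))
      (ret (Suc k) \<pi> mean_rewards h s)"
    unfolding cond_return_chain_Suc using Suc
    by (intro has_bochner_integral_sum has_bochner_integral_mult_right has_bochner_integral_add
        entry Suc.IH chain_next_in_chain_states) auto
  then show ?case
    unfolding ret_eq .
qed auto

lemma V_no_lookahead:
  assumes \<nu>: "\<nu> \<in> reward_dists S Acts H r" and \<pi>: "\<pi> \<in> lookahead_policies S Acts H 0"
  shows "V \<pi> \<nu> = ennreal (ret H \<pi> mean_rewards 1 (CS 1))"
  unfolding V_eq_nn_integral using H_pos
  by (intro nn_integral_has_bochner_integral has_bochner_integral_ret_no_lookahead[OF \<nu> \<pi>]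
      AE_ret_nonneg[OF \<nu>]) auto

lemma ret_mean_terminal:
  assumes "1 \<le> h" "h + k \<le> H + 1"
  shows "ret k \<pi> mean_rewards h CT = 0"
  using assms
proof (induction k arbitrary: h)
  case (Suc k)
  then show ?case
    unfolding cond_return_chain_Suc by (auto simp: r_terminal intro!: sum.neutral)
qed simp

lemma ret_mean_le_best:
  assumes \<pi>: "\<pi> \<in> lookahead_policies S Acts H L"
  shows "1 \<le> h \<Longrightarrow> h + k \<le> H + 1 \<Longrightarrow> ret k \<pi> mean_rewards h (CS h) \<le> best_reward"
proof (induction k arbitrary: h)
  case 0
  then show ?case by (simp add: best_reward_nonneg)
next
  case (Suc k)
  then have h: "h \<in> {1..H}" by auto
  have "mean_rewards h (CS h, a) + ret k \<pi> mean_rewards (Suc h) (chain_next H a1 (CS h) a) \<le> best_reward"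
    if a: "a \<in> Acts" for a
  proof (cases "h < H \<and> a = a1")
    case True
    then show ?thesis
      using Suc r_forward[OF h h] by simp
  next
    case False
    then show ?thesis
      using ret_mean_terminal[of "Suc h" k] Suc.prems best_reward_ge[OF h a] by auto
  qed
  then have "ret (Suc k) \<pi> mean_rewards h (CS h) \<le> (\<Sum>a\<in>Acts. pmf (\<pi> h (CS h) mean_rewards) a * best_reward)"
    unfolding cond_return_chain_Suc by (intro sum_mono mult_left_mono) auto
  also have "\<dots> = best_reward"
    using lookahead_policy_sum_pmf[OF \<pi> h _ finite_Acts] h by (simp add: sum_distrib_right[symmetric])
  finally show ?case .
qed

definition commit_policy :: "nat \<Rightarrow> 'a \<Rightarrow> nat \<Rightarrow> chain_state \<Rightarrow> (nat \<Rightarrow> chain_state \<times> 'a \<Rightarrow> real) \<Rightarrow> 'a pmf" where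
  "commit_policy k0 a0 h s \<rho> = return_pmf (if h = k0 then a0 else a1)"

lemma commit_policy_lookahead: "a0 \<in> Acts \<Longrightarrow> commit_policy k0 a0 \<in> lookahead_policies S Acts H L"
  unfolding lookahead_policies_def commit_policy_def using a1_in_Acts by auto

lemma ret_commit_policy_ge:
  assumes k0: "k0 \<in> {1..H}" and a0: "a0 \<in> Acts"
  shows "1 \<le> h \<Longrightarrow> h \<le> k0 \<Longrightarrow> h + k = H + 1 \<Longrightarrow>
    r k0 (CS k0) a0 \<le> ret k (commit_policy k0 a0) mean_rewards h (CS h)"
proof (induction k arbitrary: h)
  case 0
  then show ?case using k0 by simp
next
  case (Suc k)
  then have h: "h \<in> {1..H}" using k0 by auto
  define b where "b = (if h = k0 then a0 else a1)"
  have step: "ret (Suc k) (commit_policy k0 a0) mean_rewards h (CS h) =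
      r h (CS h) b + ret k (commit_policy k0 a0) mean_rewards (Suc h) (chain_next H a1 (CS h) b)"
    using a0 a1_in_Acts finite_Acts
    by (subst cond_return_chain_deterministic[where b = b]) (auto simp: commit_policy_def b_def)
  show ?case
  proof (cases "h = k0")
    case True
    have "0 \<le> ret k (commit_policy k0 a0) mean_rewards (Suc h) (chain_next H a1 (CS h) b)"
      using Suc.prems h by (intro ret_nonneg[OF mean_rewards_nonneg] chain_next_in_chain_states) auto
    then show ?thesis
      using step True by (simp add: b_def)
  next
    case False
    then have "h < k0" using Suc.prems by simp
    then show ?thesis
      using step Suc r_forward[OF h h] k0 by (simp add: b_def)
  qed
qed

lemma V_opt_no_lookahead:
  assumes \<nu>: "\<nu> \<in> reward_dists S Acts H r"
  shows "V_opt 0 \<nu> = ennreal best_reward"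
proof (rule antisym)
  show "V_opt 0 \<nu> \<le> ennreal best_reward"
    unfolding opt_value_def
    using ret_mean_le_best H_pos by (intro SUP_least) (auto simp: V_no_lookahead[OF \<nu>] intro!: ennreal_leI)
next
  obtain k0 a0 where k0: "k0 \<in> {1..H}" and a0: "a0 \<in> Acts" and best: "best_reward = r k0 (CS k0) a0"
    using best_reward_attained by blast
  have "ennreal best_reward \<le> V (commit_policy k0 a0) \<nu>"
    using ret_commit_policy_ge[OF k0 a0, of 1 H] k0
    by (auto simp: V_no_lookahead[OF \<nu> commit_policy_lookahead[OF a0]] best intro!: ennreal_leI)
  also have "\<dots> \<le> V_opt 0 \<nu>"
    unfolding opt_value_def by (rule SUP_upper[OF commit_policy_lookahead[OF a0]])
  finally show "ennreal best_reward \<le> V_opt 0 \<nu>" .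
qed

subsection \<open>A hard reward distribution for one-step lookahead\<close>

definition other_actions :: "'a list" where
  "other_actions = (SOME ys. set ys = Acts - {a1})"

lemma set_other_actions: "set other_actions = Acts - {a1}"
  unfolding other_actions_def using finite_Acts by (metis (mono_tags) finite_Diff finite_list someI_ex)

definition first_positive :: "(chain_state \<times> 'a \<Rightarrow> real) \<Rightarrow> chain_state \<Rightarrow> 'a option" where
  "first_positive x s = find (\<lambda>b. 0 < x (s, b)) other_actions"

lemma first_positive_SomeD: "first_positive x s = Some b \<Longrightarrow> b \<in> Acts - {a1} \<and> 0 < x (s, b)"
  unfolding first_positive_def using set_other_actions by (metis find_Some_iff nth_mem)

lemma measurable_first_positive:
  assumes "s \<in> S"
  shows "(\<lambda>x. first_positive x s) \<in> measurable (rew_space S Acts) (count_space UNIV)"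
  unfolding first_positive_def
proof (intro measurable_find)
  fix b assume "b \<in> set other_actions"
  then have [measurable]: "(\<lambda>x. x (s, b)) \<in> borel_measurable (rew_space S Acts)"
    using assms set_other_actions by (intro measurable_rew_space_entry) auto
  show "Measurable.pred (rew_space S Acts) (\<lambda>x. 0 < x (s, b))"
    by measurable
qed

definition greedy_policy :: "nat \<Rightarrow> chain_state \<Rightarrow> (nat \<Rightarrow> chain_state \<times> 'a \<Rightarrow> real) \<Rightarrow> 'a pmf" where
  "greedy_policy h s \<rho> = return_pmf (case first_positive (\<rho> h) s of None \<Rightarrow> a1 | Some b \<Rightarrow> b)"

lemma greedy_policy_lookahead:
  assumes "1 \<le> L"
  shows "greedy_policy \<in> lookahead_policies S Acts H L"
  unfolding lookahead_policies_def
proof (intro CollectI ballI conjI allI impI)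
  fix h s \<rho>
  show "set_pmf (greedy_policy h s \<rho>) \<subseteq> Acts"
    using a1_in_Acts first_positive_SomeD by (auto simp: greedy_policy_def split: option.split)
next
  fix h s and \<rho> \<rho>' :: "nat \<Rightarrow> chain_state \<times> 'a \<Rightarrow> real"
  assume "\<forall>t. h \<le> t \<and> t \<le> min (h + L - 1) H \<longrightarrow> \<rho> t = \<rho>' t" and "h \<in> {1..H}"
  then have "\<rho> h = \<rho>' h"
    using assms by auto
  then show "greedy_policy h s \<rho> = greedy_policy h s \<rho>'"
    by (simp add: greedy_policy_def)
next
  fix h s a assume h: "h \<in> {1..H}" and s: "s \<in> S"
  let ?M = "PiM {1..H} (\<lambda>_. rew_space S Acts)"
  have "(\<lambda>\<rho>. first_positive (\<rho> h) s) \<in> measurable ?M (count_space UNIV)"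
    using h by (intro measurable_compose[OF _ measurable_first_positive[OF s]]) auto
  then have "(\<lambda>\<rho>. (\<lambda>q. pmf (return_pmf (case q of None \<Rightarrow> a1 | Some b \<Rightarrow> b)) a) (first_positive (\<rho> h) s))
      \<in> borel_measurable ?M"
    by (rule measurable_compose) simp
  then show "(\<lambda>\<rho>. pmf (greedy_policy h s \<rho>) a) \<in> borel_measurable ?M"
    by (simp add: greedy_policy_def)
qed

definition greedy_stays :: "nat \<Rightarrow> (chain_state \<times> 'a \<Rightarrow> real) \<Rightarrow> real" where
  "greedy_stays t x = (if first_positive x (CS t) = None then 1 else 0)"

definition greedy_gain :: "nat \<Rightarrow> (chain_state \<times> 'a \<Rightarrow> real) \<Rightarrow> real" where
  "greedy_gain t x = (case first_positive x (CS t) of None \<Rightarrow> 0 | Some b \<Rightarrow> x (CS t, b))"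

lemma greedy_stays_nonneg: "0 \<le> greedy_stays t x"
  by (simp add: greedy_stays_def)

lemma greedy_gain_nonneg: "0 \<le> greedy_gain t x"
  using first_positive_SomeD[of x "CS t"] by (auto simp: greedy_gain_def less_imp_le split: option.split)

text \<open>The \<open>t\<close>-th term is the reward taken at step \<open>t\<close>, which happens iff no earlier step offered a
  positive reward off the chain.\<close>

lemma ret_greedy_ge:
  assumes \<rho>: "\<forall>t\<in>{1..H}. \<forall>s\<in>S. \<forall>a\<in>Acts. 0 \<le> \<rho> t (s, a)"
  shows "1 \<le> h \<Longrightarrow> h + k = H + 1 \<Longrightarrow>
    (\<Sum>t=h..H. (\<Prod>u=h..<t. greedy_stays u (\<rho> u)) * greedy_gain t (\<rho> t)) \<le> ret k greedy_policy \<rho> h (CS h)"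
proof (induction k arbitrary: h)
  case (Suc k)
  then have h: "h \<in> {1..H}" by auto
  define tail where "tail = (\<Sum>t=Suc h..H. (\<Prod>u=Suc h..<t. greedy_stays u (\<rho> u)) * greedy_gain t (\<rho> t))"
  have sum_eq: "(\<Sum>t=h..H. (\<Prod>u=h..<t. greedy_stays u (\<rho> u)) * greedy_gain t (\<rho> t)) =
      greedy_gain h (\<rho> h) + greedy_stays h (\<rho> h) * tail"
    unfolding tail_def using h by (intro sum_prod_prefix_atLeast_Suc) auto
  have ret_step: "ret (Suc k) greedy_policy \<rho> h (CS h) =
      \<rho> h (CS h, b) + ret k greedy_policy \<rho> (Suc h) (chain_next H a1 (CS h) b)"
    if "greedy_policy h (CS h) \<rho> = return_pmf b" "b \<in> Acts" for b
    using that finite_Acts by (rule cond_return_chain_deterministic)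
  have ret_nonneg_next: "0 \<le> ret k greedy_policy \<rho> (Suc h) s" if "s \<in> S" for s
    using Suc.prems that by (intro ret_nonneg[OF \<rho>]) auto
  show ?case
  proof (cases "first_positive (\<rho> h) (CS h)")
    case None
    then have pol: "greedy_policy h (CS h) \<rho> = return_pmf a1"
      and "greedy_stays h (\<rho> h) = 1" "greedy_gain h (\<rho> h) = 0"
      by (simp_all add: greedy_policy_def greedy_stays_def greedy_gain_def)
    moreover have "tail \<le> ret k greedy_policy \<rho> (Suc h) (chain_next H a1 (CS h) a1)"
    proof (cases "h < H")
      case True
      then show ?thesis
        unfolding tail_def using Suc by simp
    next
      case False
      then show ?thesis
        unfolding tail_def using ret_nonneg_next[of CT] by simp
    qed
    moreover have "0 \<le> \<rho> h (CS h, a1)"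
      using \<rho> h a1_in_Acts by auto
    ultimately show ?thesis
      unfolding sum_eq ret_step[OF pol a1_in_Acts] by simp
  next
    case (Some b)
    then have pol: "greedy_policy h (CS h) \<rho> = return_pmf b"
      and "greedy_stays h (\<rho> h) = 0" "greedy_gain h (\<rho> h) = \<rho> h (CS h, b)"
      by (simp_all add: greedy_policy_def greedy_stays_def greedy_gain_def)
    moreover have b: "b \<in> Acts" "b \<noteq> a1"
      using Some first_positive_SomeD by blast+
    ultimately show ?thesis
      unfolding sum_eq ret_step[OF pol b(1)] using ret_nonneg_next[of CT] by simp
  qed
qed simp

definition sparse_choice :: "real \<Rightarrow> 'a option pmf" where
  "sparse_choice \<theta> = bind_pmf (bernoulli_pmf \<theta>)
     (\<lambda>b. if b then map_pmf Some (pmf_of_set Acts) else return_pmf None)"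

text \<open>Restricted to \<open>S \<times> Acts\<close>, since the space of \<open>rew_space\<close> consists of extensional
  functions.\<close>

definition sparse_rewards :: "real \<Rightarrow> nat \<Rightarrow> 'a option \<Rightarrow> chain_state \<times> 'a \<Rightarrow> real" where
  "sparse_rewards \<theta> t q = restrict (\<lambda>(s, b). if q = Some b then r t s b * card Acts / \<theta> else 0) (S \<times> Acts)"

definition sparse_dist :: "real \<Rightarrow> nat \<Rightarrow> (chain_state \<times> 'a \<Rightarrow> real) measure" where
  "sparse_dist \<theta> t = distr (measure_pmf (sparse_choice \<theta>)) (rew_space S Acts) (sparse_rewards \<theta> t)"

lemma has_bochner_integral_sparse_choice:
  assumes "0 \<le> \<theta>" "\<theta> \<le> 1"
  shows "has_bochner_integral (measure_pmf (sparse_choice \<theta>)) F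
           ((1 - \<theta>) * F None + \<theta> / card Acts * (\<Sum>a\<in>Acts. F (Some a)))"
proof -
  have Acts: "Acts \<noteq> {}" "finite Acts"
    using a1_in_Acts finite_Acts by auto
  have support: "set_pmf (sparse_choice \<theta>) \<subseteq> insert None (Some ` Acts)"
    using Acts by (auto simp: sparse_choice_def set_pmf_of_set[OF Acts] split: if_splits)
  have pmf_None: "pmf (sparse_choice \<theta>) None = 1 - \<theta>"
    using assms by (simp add: sparse_choice_def pmf_bind pmf_eq_0_set_pmf)
  have pmf_Some: "pmf (sparse_choice \<theta>) (Some a) = \<theta> / card Acts" if "a \<in> Acts" for a
    using assms that Acts by (simp add: sparse_choice_def pmf_bind pmf_map_inj')
  have "(\<integral>q. F q \<partial>measure_pmf (sparse_choice \<theta>)) = (\<Sum>q\<in>insert None (Some ` Acts). F q * pmf (sparse_choice \<theta>) q)"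
    using support Acts by (intro integral_measure_pmf_real) auto
  also have "\<dots> = (1 - \<theta>) * F None + \<theta> / card Acts * (\<Sum>a\<in>Acts. F (Some a))"
    using Acts by (simp add: sum.reindex pmf_None pmf_Some sum_distrib_left mult.commute)
  finally show ?thesis
    using support Acts by (auto simp: has_bochner_integral_iff intro: integrable_measure_pmf_finite finite_subset)
qed

lemma measurable_sparse_rewards:
  "sparse_rewards \<theta> t \<in> measurable (measure_pmf p) (rew_space S Acts)"
  by (simp add: rew_space_def space_PiM sparse_rewards_def)

lemma has_bochner_integral_sparse_dist:
  assumes "0 \<le> \<theta>" "\<theta> \<le> 1" "g \<in> borel_measurable (rew_space S Acts)"
  shows "has_bochner_integral (sparse_dist \<theta> t) g
     ((1 - \<theta>) * g (sparse_rewards \<theta> t None) + \<theta> / card Acts * (\<Sum>a\<in>Acts. g (sparse_rewards \<theta> t (Some a))))"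
  unfolding sparse_dist_def using assms
  by (intro has_bochner_integral_distr measurable_sparse_rewards has_bochner_integral_sparse_choice)

lemma sparse_dist_reward_dists:
  assumes "0 < \<theta>" "\<theta> \<le> 1"
  shows "sparse_dist \<theta> \<in> reward_dists S Acts H r"
  unfolding reward_dists_def
proof (intro CollectI ballI conjI)
  fix h s a assume h: "h \<in> {1..H}" and s: "s \<in> S" and a: "a \<in> Acts"
  have "has_bochner_integral (sparse_dist \<theta> h) (\<lambda>x. x (s, a))
      ((1 - \<theta>) * 0 + \<theta> / card Acts * (\<Sum>b\<in>Acts. if b = a then r h s a * card Acts / \<theta> else 0))"
    using has_bochner_integral_sparse_dist[OF _ _ measurable_rew_space_entry[OF s a], of \<theta> h] assms s a
    by (simp add: sparse_rewards_def)
  also have "\<dots> = r h s a"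
    using assms a finite_Acts by (auto simp: card_gt_0_iff)
  finally show "integrable (sparse_dist \<theta> h) (\<lambda>x. x (s, a))" "(\<integral>x. x (s, a) \<partial>sparse_dist \<theta> h) = r h s a"
    by (simp_all add: has_bochner_integral_iff)
  have [measurable]: "(\<lambda>x. x (s, a)) \<in> borel_measurable (rew_space S Acts)"
    by (rule measurable_rew_space_entry[OF s a])
  have "0 \<le> sparse_rewards \<theta> h q (s, a)" for q
    using r_nonneg[OF h s a] assms s a by (simp add: sparse_rewards_def)
  then show "AE x in sparse_dist \<theta> h. 0 \<le> x (s, a)"
    unfolding sparse_dist_def by (subst AE_distr_iff) (auto intro: measurable_sparse_rewards measurable_space)
next
  fix h
  show "prob_space (sparse_dist \<theta> h)"
    unfolding sparse_dist_def
    by (intro prob_space.prob_space_distr prob_space_measure_pmf measurable_sparse_rewards)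
  show "sets (sparse_dist \<theta> h) = sets (rew_space S Acts)"
    by (simp add: sparse_dist_def)
qed

lemma first_positive_sparse_None:
  "t \<in> {1..H} \<Longrightarrow> first_positive (sparse_rewards \<theta> t None) (CS t) = None"
  using set_other_actions by (auto simp: first_positive_def sparse_rewards_def find_None_iff)

lemma greedy_gain_sparse_Some:
  assumes t: "t \<in> {1..H}" and a: "a \<in> Acts" and \<theta>: "0 < \<theta>"
  shows "greedy_gain t (sparse_rewards \<theta> t (Some a)) = r t (CS t) a * card Acts / \<theta>"
proof -
  let ?x = "sparse_rewards \<theta> t (Some a)"
  have x_a: "?x (CS t, a) = r t (CS t) a * card Acts / \<theta>"
    using t a by (simp add: sparse_rewards_def)
  have first: "first_positive ?x (CS t) = (if a \<in> set other_actions \<and> 0 < ?x (CS t, a) then Some a else None)"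
    unfolding first_positive_def using t set_other_actions
    by (intro find_eq_if_unique_candidate) (auto simp: sparse_rewards_def)
  show ?thesis
  proof (cases "a \<noteq> a1 \<and> 0 < r t (CS t) a")
    case True
    moreover have "0 < real (card Acts)"
      using a finite_Acts card_gt_0_iff by auto
    ultimately show ?thesis
      using first x_a a \<theta> set_other_actions by (simp add: greedy_gain_def)
  next
    case False
    then have "r t (CS t) a = 0"
      using r_forward[OF t t] r_nonneg[of t "CS t" a] t a by force
    then show ?thesis
      using first x_a by (simp add: greedy_gain_def)
  qed
qed

lemma borel_measurable_greedy_stays: "t \<in> {1..H} \<Longrightarrow> greedy_stays t \<in> borel_measurable (rew_space S Acts)"
  unfolding greedy_stays_def[abs_def]
  by (rule measurable_compose[OF measurable_first_positive, where g = "\<lambda>q. if q = None then 1 else 0"]) auto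

lemma borel_measurable_greedy_gain:
  assumes "t \<in> {1..H}"
  shows "greedy_gain t \<in> borel_measurable (rew_space S Acts)"
proof -
  have "CS t \<in> S"
    using assms by simp
  note [measurable] = measurable_first_positive[OF this]
  have [measurable]: "(\<lambda>x. x (CS t, b)) \<in> borel_measurable (rew_space S Acts)" if "b \<in> Acts" for b
    using assms that by (intro measurable_rew_space_entry) auto
  have eq: "greedy_gain t = (\<lambda>x. \<Sum>b\<in>Acts - {a1}. if first_positive x (CS t) = Some b then x (CS t, b) else 0)"
  proof
    fix x
    show "greedy_gain t x = (\<Sum>b\<in>Acts - {a1}. if first_positive x (CS t) = Some b then x (CS t, b) else 0)"
      using first_positive_SomeD[of x "CS t"] finite_Acts
      by (cases "first_positive x (CS t)") (simp_all add: greedy_gain_def)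
  qed
  show ?thesis
    unfolding eq using assms by measurable
qed

lemma nn_integral_greedy_stays_ge:
  assumes "0 < \<theta>" "\<theta> \<le> 1" "t \<in> {1..H}"
  shows "ennreal (1 - \<theta>) \<le> (\<integral>\<^sup>+x. ennreal (greedy_stays t x) \<partial>sparse_dist \<theta> t)"
proof -
  let ?v = "(1 - \<theta>) * greedy_stays t (sparse_rewards \<theta> t None) +
    \<theta> / card Acts * (\<Sum>a\<in>Acts. greedy_stays t (sparse_rewards \<theta> t (Some a)))"
  have "has_bochner_integral (sparse_dist \<theta> t) (greedy_stays t) ?v"
    using assms by (intro has_bochner_integral_sparse_dist borel_measurable_greedy_stays) auto
  then have "(\<integral>\<^sup>+x. ennreal (greedy_stays t x) \<partial>sparse_dist \<theta> t) = ennreal ?v"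
    by (intro nn_integral_has_bochner_integral) (simp_all add: greedy_stays_nonneg)
  moreover have "1 - \<theta> \<le> ?v"
    using assms first_positive_sparse_None
    by (auto simp: greedy_stays_def intro!: divide_nonneg_nonneg mult_nonneg_nonneg sum_nonneg)
  ultimately show ?thesis
    by (simp add: ennreal_leI)
qed

lemma nn_integral_greedy_gain:
  assumes "0 < \<theta>" "\<theta> \<le> 1" "t \<in> {1..H}"
  shows "(\<integral>\<^sup>+x. ennreal (greedy_gain t x) \<partial>sparse_dist \<theta> t) = ennreal (\<Sum>a\<in>Acts. r t (CS t) a)"
proof -
  have "has_bochner_integral (sparse_dist \<theta> t) (greedy_gain t)
      ((1 - \<theta>) * 0 + \<theta> / card Acts * (\<Sum>a\<in>Acts. r t (CS t) a * card Acts / \<theta>))"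
    using has_bochner_integral_sparse_dist[OF _ _ borel_measurable_greedy_gain, of \<theta> t t] assms
      first_positive_sparse_None[of t \<theta>]
    by (simp add: greedy_gain_def[of t "sparse_rewards \<theta> t None"] greedy_gain_sparse_Some)
  also have "\<theta> / card Acts * (\<Sum>a\<in>Acts. r t (CS t) a * card Acts / \<theta>) = (\<Sum>a\<in>Acts. r t (CS t) a)"
    using assms a1_in_Acts finite_Acts by (auto simp: sum_distrib_left card_gt_0_iff intro!: sum.cong)
  finally show ?thesis
    by (intro nn_integral_has_bochner_integral) (simp_all add: greedy_gain_nonneg)
qed

lemma nn_integral_greedy_term_ge:
  assumes \<theta>: "0 < \<theta>" "\<theta> \<le> 1" and t: "t \<in> {1..H}"
  shows "ennreal ((1 - \<theta>) ^ (t - 1) * (\<Sum>a\<in>Acts. r t (CS t) a)) \<le>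
    (\<integral>\<^sup>+\<rho>. ennreal ((\<Prod>u=1..<t. greedy_stays u (\<rho> u)) * greedy_gain t (\<rho> t)) \<partial>PiM {1..H} (sparse_dist \<theta>))"
proof -
  let ?f = "\<lambda>i. if i < t then (\<lambda>x. ennreal (greedy_stays i x)) else (\<lambda>x. ennreal (greedy_gain i x))"
  have w: "0 \<le> (\<Sum>a\<in>Acts. r t (CS t) a)"
    using t r_nonneg by (intro sum_nonneg) auto
  have "ennreal ((1 - \<theta>) ^ (t - 1) * (\<Sum>a\<in>Acts. r t (CS t) a)) =
      (\<Prod>i=1..t. if i < t then ennreal (1 - \<theta>) else ennreal (\<Sum>a\<in>Acts. r t (CS t) a))"
    using t \<theta> w by (subst prod_atLeastAtMost_if_less) (auto simp: ennreal_mult ennreal_power)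
  also have "\<dots> \<le> (\<Prod>i=1..t. \<integral>\<^sup>+x. ?f i x \<partial>sparse_dist \<theta> i)"
    using t \<theta> by (intro prod_mono_ennreal) (auto simp: nn_integral_greedy_stays_ge nn_integral_greedy_gain not_less)
  also have "\<dots> = (\<integral>\<^sup>+\<rho>. (\<Prod>i=1..t. ?f i (\<rho> i)) \<partial>PiM {1..H} (sparse_dist \<theta>))"
    using t \<theta> reward_dists_prob_space[OF sparse_dist_reward_dists[OF \<theta>]]
    by (intro nn_integral_PiM_prod[symmetric])
       (auto simp: sparse_dist_def intro!: measurable_compose[OF _ measurable_ennreal]
         borel_measurable_greedy_stays borel_measurable_greedy_gain)
  also have "\<dots> = (\<integral>\<^sup>+\<rho>. ennreal ((\<Prod>u=1..<t. greedy_stays u (\<rho> u)) * greedy_gain t (\<rho> t)) \<partial>PiM {1..H} (sparse_dist \<theta>))"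
  proof (intro nn_integral_cong)
    fix \<rho> :: "nat \<Rightarrow> chain_state \<times> 'a \<Rightarrow> real"
    have "(\<Prod>i=1..t. ?f i (\<rho> i)) =
        (\<Prod>i=1..t. if i < t then ennreal (greedy_stays i (\<rho> i)) else ennreal (greedy_gain i (\<rho> i)))"
      by (intro prod.cong) auto
    also have "\<dots> = (\<Prod>u=1..<t. ennreal (greedy_stays u (\<rho> u))) * ennreal (greedy_gain t (\<rho> t))"
      using t by (intro prod_atLeastAtMost_if_less) auto
    also have "\<dots> = ennreal ((\<Prod>u=1..<t. greedy_stays u (\<rho> u)) * greedy_gain t (\<rho> t))"
      by (simp add: prod_ennreal greedy_stays_nonneg greedy_gain_nonneg ennreal_mult prod_nonneg)
    finally show "(\<Prod>i=1..t. ?f i (\<rho> i)) = ennreal ((\<Prod>u=1..<t. greedy_stays u (\<rho> u)) * greedy_gain t (\<rho> t))" .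
  qed
  finally show ?thesis .
qed

lemma V_opt_sparse_ge:
  assumes \<theta>: "0 < \<theta>" "\<theta> \<le> 1" and L: "1 \<le> L"
  shows "ennreal ((1 - \<theta>) ^ H * total_reward) \<le> V_opt L (sparse_dist \<theta>)"
proof -
  let ?\<nu> = "sparse_dist \<theta>"
  let ?term = "\<lambda>t \<rho>. (\<Prod>u=1..<t. greedy_stays u (\<rho> u)) * greedy_gain t (\<rho> t)"
  note \<nu> = sparse_dist_reward_dists[OF \<theta>]
  have term_meas: "(\<lambda>\<rho>. ennreal (?term t \<rho>)) \<in> borel_measurable (PiM {1..H} ?\<nu>)" if "t \<in> {1..H}" for t
  proof -
    have greedy_stays: "(\<lambda>\<rho>. greedy_stays u (\<rho> u)) \<in> borel_measurable (PiM {1..H} ?\<nu>)"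
      and gain: "(\<lambda>\<rho>. greedy_gain u (\<rho> u)) \<in> borel_measurable (PiM {1..H} ?\<nu>)" if "u \<in> {1..H}" for u
      using that by (auto intro!: measurable_compose[OF measurable_component_singleton]
          reward_dists_measurable[OF \<nu>] borel_measurable_greedy_stays borel_measurable_greedy_gain)
    show ?thesis
      using that by (intro measurable_compose[OF _ measurable_ennreal] borel_measurable_times
        borel_measurable_prod greedy_stays gain) auto
  qed
  have "ennreal ((1 - \<theta>) ^ H * total_reward) \<le>
      (\<Sum>t=1..H. ennreal ((1 - \<theta>) ^ (t - 1) * (\<Sum>a\<in>Acts. r t (CS t) a)))"
  proof -
    have "(1 - \<theta>) ^ H * total_reward \<le> (\<Sum>t=1..H. (1 - \<theta>) ^ (t - 1) * (\<Sum>a\<in>Acts. r t (CS t) a))"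
      unfolding total_reward_def sum_distrib_left using \<theta> r_nonneg
      by (intro sum_mono mult_right_mono power_decreasing sum_nonneg) auto
    then show ?thesis
      using \<theta> r_nonneg by (subst sum_ennreal) (auto intro!: ennreal_leI sum_nonneg mult_nonneg_nonneg)
  qed
  also have "\<dots> \<le> (\<Sum>t=1..H. \<integral>\<^sup>+\<rho>. ennreal (?term t \<rho>) \<partial>PiM {1..H} ?\<nu>)"
    using \<theta> by (intro sum_mono nn_integral_greedy_term_ge)
  also have "\<dots> = (\<integral>\<^sup>+\<rho>. (\<Sum>t=1..H. ennreal (?term t \<rho>)) \<partial>PiM {1..H} ?\<nu>)"
    using term_meas by (intro nn_integral_sum[symmetric]) auto
  also have "\<dots> = (\<integral>\<^sup>+\<rho>. ennreal (\<Sum>t=1..H. ?term t \<rho>) \<partial>PiM {1..H} ?\<nu>)"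
    by (intro nn_integral_cong sum_ennreal mult_nonneg_nonneg prod_nonneg greedy_stays_nonneg greedy_gain_nonneg)
  also have "\<dots> \<le> V greedy_policy ?\<nu>"
    unfolding V_eq_nn_integral using AE_chain_rewards_nonneg[OF \<nu>]
    by (intro nn_integral_mono_AE) (auto elim!: eventually_mono intro!: ennreal_leI ret_greedy_ge)
  also have "\<dots> \<le> V_opt L ?\<nu>"
    unfolding opt_value_def by (rule SUP_upper[OF greedy_policy_lookahead[OF L]])
  finally show ?thesis .
qed

subsection \<open>The competitive ratio\<close>

lemma comp_ratio_ge:
  "ennreal (best_reward / total_reward) \<le> comp_ratio S Acts H (chain_P H a1) chain_mu L r"
  unfolding comp_ratio_def
proof (rule INF_greatest)
  fix \<nu> assume \<nu>: "\<nu> \<in> reward_dists S Acts H r"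
  obtain v where v: "0 \<le> v" "V_opt L \<nu> = ennreal v" "v \<le> total_reward"
    using V_opt_le_total_reward[OF \<nu>] total_reward_nonneg le_ennreal_iff by blast
  show "ennreal (best_reward / total_reward) \<le> ratio (V_opt 0 \<nu>) (V_opt L \<nu>)"
  proof (cases "v = 0")
    case True
    then show ?thesis
      using v by (simp add: ratio_def)
  next
    case False
    then have "best_reward / total_reward \<le> best_reward / v"
      using v best_reward_nonneg by (intro divide_left_mono) auto
    then show ?thesis
      using False v best_reward_nonneg by (simp add: V_opt_no_lookahead[OF \<nu>] ratio_ennreal)
  qed
qed

lemma comp_ratio_le_sparse:
  assumes total: "0 < total_reward" and \<theta>: "0 < \<theta>" "\<theta> < 1" and L: "1 \<le> L"
  shows "comp_ratio S Acts H (chain_P H a1) chain_mu L r \<le> ennreal (best_reward / ((1 - \<theta>) ^ H * total_reward))"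
proof -
  let ?\<nu> = "sparse_dist \<theta>"
  have \<nu>: "?\<nu> \<in> reward_dists S Acts H r"
    using \<theta> by (intro sparse_dist_reward_dists) auto
  obtain v where v: "0 \<le> v" "V_opt L ?\<nu> = ennreal v"
    using V_opt_le_total_reward[OF \<nu>] total_reward_nonneg le_ennreal_iff by blast
  have lower: "(1 - \<theta>) ^ H * total_reward \<le> v"
    using V_opt_sparse_ge[OF \<theta>(1) _ L] \<theta> v by simp
  have pos: "0 < (1 - \<theta>) ^ H * total_reward"
    using \<theta> total by simp
  have "comp_ratio S Acts H (chain_P H a1) chain_mu L r \<le> ratio (V_opt 0 ?\<nu>) (V_opt L ?\<nu>)"
    unfolding comp_ratio_def by (rule INF_lower[OF \<nu>])
  also have "\<dots> = ennreal (best_reward / v)"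
    using pos lower v best_reward_nonneg by (simp add: V_opt_no_lookahead[OF \<nu>] ratio_ennreal)
  also have "\<dots> \<le> ennreal (best_reward / ((1 - \<theta>) ^ H * total_reward))"
    using pos lower best_reward_nonneg by (intro ennreal_leI divide_left_mono) auto
  finally show ?thesis .
qed

lemma comp_ratio_le:
  assumes "0 < total_reward" "1 \<le> L"
  shows "comp_ratio S Acts H (chain_P H a1) chain_mu L r \<le> ennreal (best_reward / total_reward)"
proof (rule tendsto_lowerbound)
  have "((\<lambda>\<theta>. best_reward / ((1 - \<theta>) ^ H * total_reward)) \<longlongrightarrow>
      best_reward / ((1 - 0) ^ H * total_reward)) (at_right 0)"
    using assms(1) by (intro tendsto_intros) auto
  then show "((\<lambda>\<theta>. ennreal (best_reward / ((1 - \<theta>) ^ H * total_reward))) \<longlongrightarrow>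
      ennreal (best_reward / total_reward)) (at_right 0)"
    by (intro tendsto_ennrealI) simp
  show "\<forall>\<^sub>F \<theta> in at_right 0. comp_ratio S Acts H (chain_P H a1) chain_mu L r
      \<le> ennreal (best_reward / ((1 - \<theta>) ^ H * total_reward))"
    using assms by (intro eventually_at_rightI[of 0 1] comp_ratio_le_sparse) auto
qed simp

lemma best_over_total_ge:
  assumes total: "0 < total_reward"
  shows "1 / (real (card Acts - 1) * real H) \<le> best_reward / total_reward"
proof -
  define c where "c = real (card Acts - 1) * real H"
  have "total_reward = (\<Sum>k=1..H. \<Sum>a\<in>Acts - {a1}. r k (CS k) a)"
    unfolding total_reward_def
  proof (rule sum.cong[OF refl])
    fix k assume "k \<in> {1..H}"
    then show "(\<Sum>a\<in>Acts. r k (CS k) a) = (\<Sum>a\<in>Acts - {a1}. r k (CS k) a)"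
      using r_forward by (simp add: sum.remove[OF finite_Acts a1_in_Acts])
  qed
  also have "\<dots> \<le> (\<Sum>k=1..H. \<Sum>a\<in>Acts - {a1}. best_reward)"
    using best_reward_ge by (intro sum_mono) auto
  also have "\<dots> = c * best_reward"
    using a1_in_Acts finite_Acts by (simp add: c_def card_Diff_singleton)
  finally have le: "total_reward \<le> c * best_reward" .
  with total have pos: "0 < c * best_reward"
    by linarith
  then have "1 / c = best_reward / (c * best_reward)"
    by (subst nonzero_divide_mult_cancel_right) auto
  also have "\<dots> \<le> best_reward / total_reward"
    using total pos le best_reward_nonneg by (intro divide_left_mono) auto
  finally show ?thesis
    unfolding c_def .
qed

lemma comp_ratio_eq:
  "0 < total_reward \<Longrightarrow> 1 \<le> L \<Longrightarrow>
    comp_ratio S Acts H (chain_P H a1) chain_mu L r = ennreal (best_reward / total_reward)"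
  by (rule antisym[OF comp_ratio_le comp_ratio_ge])

end

theorem mainTheorem8:
  fixes Acts :: "'a set" and a1 :: 'a and H :: nat
    and r :: "nat \<Rightarrow> chain_state \<Rightarrow> 'a \<Rightarrow> real"
  assumes "finite Acts" and "card Acts \<ge> 2" and "a1 \<in> Acts" and "H \<ge> 1"
    and "\<forall>h\<in>{1..H}. \<forall>s\<in>chain_states H. \<forall>a\<in>Acts. 0 \<le> r h s a"
    and "\<forall>h\<in>{1..H}. \<forall>k\<in>{1..H}. r h (CS k) a1 = 0"
    and "\<forall>h\<in>{1..H}. \<forall>a\<in>Acts. r h CT a = 0"
    and "\<exists>k\<in>{1..H}. \<exists>a\<in>Acts - {a1}. r k (CS k) a \<noteq> 0"
  shows "comp_ratio (chain_states H) Acts H (chain_P H a1) chain_mu H r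
           = ennreal ((MAX (k, a) \<in> {1..H} \<times> Acts. r k (CS k) a)
                      / (\<Sum>k=1..H. \<Sum>a\<in>Acts. r k (CS k) a))
       \<and> comp_ratio (chain_states H) Acts H (chain_P H a1) chain_mu 1 r
           = ennreal ((MAX (k, a) \<in> {1..H} \<times> Acts. r k (CS k) a)
                      / (\<Sum>k=1..H. \<Sum>a\<in>Acts. r k (CS k) a))
       \<and> (MAX (k, a) \<in> {1..H} \<times> Acts. r k (CS k) a) / (\<Sum>k=1..H. \<Sum>a\<in>Acts. r k (CS k) a)
           \<ge> 1 / (real (card Acts - 1) * real H)"
proof -
  interpret chain_mdp Acts a1 H r
    using assms by unfold_locales auto
  have total: "0 < total_reward"
    using assms(8) by (intro total_reward_pos) blast
  show ?thesis
    using comp_ratio_eq[OF total] best_over_total_ge[OF total] assms(4)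
    unfolding best_reward_def total_reward_def by simp
qed

end
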